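(* If $X$ is a non-separated-points space, then $X$ is dense-pathwise connected, i.e., every dense subset of $X$ (with the subspace topology) is pathwise connected.
   Context: Two distinct points $x,y$ of a space $X$ are called not $T_1$-points if there exists $z\in\{x,y\}$ such that $\{x,y\}\subset U$ for every open neighborhood $U$ of $z$ in $X$. A space $X$ is a non-separated-points space if every two distinct points of $X$ are not $T_1$-points. *)

theory Defs
  imports "HOL-Analysis.Analysis"
begin

definition not_T1_points :: "'a topology \<Rightarrow> 'a \<Rightarrow> 'a \<Rightarrow> bool" where
  "not_T1_points X x y \<longleftrightarrow>
     (\<exists>z\<in>{x, y}. \<forall>U. openin X U \<and> z \<in> U \<longrightarrow> {x, y} \<subseteq> U)"

definition non_separated_points_space :: "'a topology \<Rightarrow> bool" where
  "non_separated_points_space X \<longleftrightarrow>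
     (\<forall>x\<in>topspace X. \<forall>y\<in>topspace X. x \<noteq> y \<longrightarrow> not_T1_points X x y)"

definition dense_pathwise_connected :: "'a topology \<Rightarrow> bool" where
  "dense_pathwise_connected X \<longleftrightarrow>
     (\<forall>D. D \<subseteq> topspace X \<and> X closure_of D = topspace X
          \<longrightarrow> path_connected_space (subtopology X D))"

end

theory Submission
  imports Defs
begin

text \<open>If every open set containing \<open>x\<close> also contains \<open>y\<close>, the path that sits at \<open>x\<close> at time
  \<open>0\<close> and at \<open>y\<close> afterwards is continuous: the preimage of an open set is all of \<open>[0,1]\<close>, \<open>(0,1]\<close>
  or empty. In a non-separated-points space this joins any two points, and the property
  passes to every subspace, in particular to every dense one.\<close>

lemma path_component_of_if_in_every_open_nbhd:
  assumes "x \<in> topspace X" "y \<in> topspace X"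
    and nbhd: "\<And>U. \<lbrakk>openin X U; x \<in> U\<rbrakk> \<Longrightarrow> y \<in> U"
  shows "path_component_of X x y"
proof -
  define g where "g = (\<lambda>t::real. if t = 0 then x else y)"
  have "openin (top_of_set {0..1}) {t \<in> {0..1}. g t \<in> U}" if U: "openin X U" for U
  proof -
    consider "x \<in> U" | "x \<notin> U" "y \<in> U" | "x \<notin> U" "y \<notin> U"
      by blast
    then show ?thesis
    proof cases
      case 1
      with nbhd U have "{t \<in> {0..1}. g t \<in> U} = {0..1}"
        by (auto simp: g_def)
      then show ?thesis
        by simp
    next
      case 2
      then have "{t \<in> {0..1}. g t \<in> U} = {0..1} \<inter> {0<..}"
        by (auto simp: g_def)
      then show ?thesis
        by (simp only:) (intro openin_open_Int open_greaterThan)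
    next
      case 3
      then show ?thesis
        by (simp add: g_def)
    qed
  qed
  then have "pathin X g"
    using assms by (auto simp: pathin_def continuous_map_def g_def)
  then show ?thesis
    unfolding path_component_of_def by (force simp: g_def)
qed

lemma not_T1_points_imp_path_component_of:
  assumes "x \<in> topspace X" "y \<in> topspace X" "not_T1_points X x y"
  shows "path_component_of X x y"
proof -
  from \<open>not_T1_points X x y\<close> consider
      "\<And>U. \<lbrakk>openin X U; x \<in> U\<rbrakk> \<Longrightarrow> y \<in> U" | "\<And>U. \<lbrakk>openin X U; y \<in> U\<rbrakk> \<Longrightarrow> x \<in> U"
    unfolding not_T1_points_def by blast
  then show ?thesis
    by cases (use assms path_component_of_if_in_every_open_nbhd path_component_of_sym in metis)+
qed

lemma non_separated_points_space_subtopology: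
  assumes "non_separated_points_space X"
  shows "non_separated_points_space (subtopology X S)"
  using assms
  unfolding non_separated_points_space_def not_T1_points_def openin_subtopology
  by (auto 4 3)

lemma non_separated_points_space_imp_path_connected_space:
  assumes "non_separated_points_space X"
  shows "path_connected_space X"
  unfolding path_connected_space_iff_path_component
proof (intro ballI)
  fix x y
  assume "x \<in> topspace X" "y \<in> topspace X"
  with assms show "path_component_of X x y"
    by (cases "x = y")
      (auto simp: path_component_of_refl non_separated_points_space_def
        intro: not_T1_points_imp_path_component_of)
qed

theorem theorem5p6:
  fixes X :: "'a topology"
  assumes "non_separated_points_space X"
  shows "dense_pathwise_connected X"
  using assms
  unfolding dense_pathwise_connected_def
  by (blast intro: non_separated_points_space_imp_path_connected_space
      non_separated_points_space_subtopology)

end
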